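(* Let $k,n$ be integers with $0<k\leqslant n<2k$, and set $m=2k$. Then $\alpha(2k,n,k)=\frac{1}{2}\binom{2k}{k}=h(2k,n,k)$.
   Context: For positive integers $a\leqslant b$, $[a,b]=\{a,a+1,\dots,b\}$ and $[a]=[1,a]$; $\binom{X}{k}$ denotes the family of all $k$-subsets of a set $X$. A family of sets is intersecting if no two of its members are disjoint. For integers $0<k\leqslant n<2k\leqslant m$, an $(m,n,k)$-intersecting family is an intersecting family $\mathcal{F}$ with $\binom{[n]}{k}\subseteq\mathcal{F}\subseteq\binom{[m]}{k}$, and $\alpha(m,n,k)$ is the maximum cardinality of an $(m,n,k)$-intersecting family. Define $h(m,n,k)=\binom{n}{k}+\sum_{i=1}^{2k-n-1}\binom{n-1}{k-i-1}\binom{m-n}{i}$. *)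

theory Defs
  imports Complex_Main
begin

definition ksubsets :: "nat set \<Rightarrow> nat \<Rightarrow> nat set set" where
  "ksubsets X k = {A. A \<subseteq> X \<and> card A = k}"

definition intersecting :: "'a set set \<Rightarrow> bool" where
  "intersecting F \<longleftrightarrow> (\<forall>A\<in>F. \<forall>B\<in>F. A \<inter> B \<noteq> {})"

definition mnk_intersecting :: "nat \<Rightarrow> nat \<Rightarrow> nat \<Rightarrow> nat set set \<Rightarrow> bool" where
  "mnk_intersecting m n k F \<longleftrightarrow>
     intersecting F \<and> ksubsets {1..n} k \<subseteq> F \<and> F \<subseteq> ksubsets {1..m} k"

definition alpha :: "nat \<Rightarrow> nat \<Rightarrow> nat \<Rightarrow> nat" where
  "alpha m n k = Max {card F | F. mnk_intersecting m n k F}"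

definition h :: "nat \<Rightarrow> nat \<Rightarrow> nat \<Rightarrow> nat" where
  "h m n k = (n choose k) +
     (\<Sum>i = 1..2*k - n - 1. ((n - 1) choose (k - i - 1)) * ((m - n) choose i))"

end

theory Submission
  imports Defs
begin

text \<open>Complementation in \<open>[2k]\<close> maps an intersecting family of \<open>k\<close>-sets injectively into the
  \<open>k\<close>-sets outside it, so such a family has at most half of all \<open>k\<close>-sets. The family of all
  \<open>k\<close>-subsets of \<open>[2k-1]\<close> is intersecting (two disjoint \<open>k\<close>-sets need \<open>2k\<close> points), contains
  all \<open>k\<close>-subsets of \<open>[n]\<close> and has exactly half the size, since \<open>C(2k,k) = 2 C(2k-1,k)\<close>. Finally
  Vandermonde's identity, split according to the size of the intersection with \<open>[n+1,2k]\<close>,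
  evaluates \<open>h(2k,n,k)\<close> to \<open>C(2k-1,k-1) = C(2k-1,k)\<close>.\<close>

lemma card_ksubsets:
  assumes "finite X"
  shows "card (ksubsets X k) = card X choose k"
  unfolding ksubsets_def using n_subsets[OF assms] by simp

lemma finite_ksubsets: "finite X \<Longrightarrow> finite (ksubsets X k)"
  unfolding ksubsets_def by simp

lemma intersecting_ksubsets:
  assumes "finite X" and "card X < 2 * k"
  shows "intersecting (ksubsets X k)"
  unfolding intersecting_def
proof (intro ballI notI)
  fix A B
  assume A: "A \<in> ksubsets X k" and B: "B \<in> ksubsets X k" and disjoint: "A \<inter> B = {}"
  have "A \<subseteq> X" "B \<subseteq> X" "card A = k" "card B = k"
    using A B unfolding ksubsets_def by auto
  moreover from this have "finite A" "finite B"
    using assms(1) finite_subset by auto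
  ultimately have "card (A \<union> B) = 2 * k" and "A \<union> B \<subseteq> X"
    using card_Un_disjoint[OF _ _ disjoint] by auto
  then show False
    using card_mono[OF assms(1), of "A \<union> B"] assms(2) by simp
qed

lemma card_intersecting_le_half:
  assumes "finite U" and "card U = 2 * k"
    and "intersecting F" and "F \<subseteq> ksubsets U k"
  shows "2 * card F \<le> card U choose k"
proof -
  have fin: "finite (ksubsets U k)"
    using finite_ksubsets[OF assms(1)] .
  have compl_mem: "U - A \<in> ksubsets U k - F" if "A \<in> F" for A
  proof -
    have "A \<subseteq> U" "card A = k"
      using that assms(4) unfolding ksubsets_def by auto
    then have "card (U - A) = k"
      using assms(1,2) card_Diff_subset[of A U] finite_subset[of A U] by simp
    moreover have "U - A \<notin> F"
      using that assms(3) unfolding intersecting_def by blast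
    ultimately show ?thesis
      unfolding ksubsets_def by auto
  qed
  have "inj_on (\<lambda>A. U - A) F"
  proof (rule inj_onI)
    fix A B
    assume "A \<in> F" "B \<in> F" "U - A = U - B"
    moreover from this have "A \<subseteq> U" "B \<subseteq> U"
      using assms(4) unfolding ksubsets_def by auto
    ultimately show "A = B"
      by (metis double_diff order_refl)
  qed
  then have "card F = card ((\<lambda>A. U - A) ` F)"
    by (simp add: card_image)
  also have "\<dots> \<le> card (ksubsets U k - F)"
    using compl_mem fin by (intro card_mono) auto
  also have "\<dots> = card (ksubsets U k) - card F"
    using assms(4) fin finite_subset by (intro card_Diff_subset) auto
  finally show ?thesis
    using card_ksubsets[OF assms(1), of k] by simp
qed

lemma choose_odd_middle:
  assumes "0 < k"
  shows "(2 * k - 1) choose (k - 1) = (2 * k - 1) choose k"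
  using binomial_symmetric[of k "2 * k - 1"] assms
  by (simp add: numeral_2_eq_2)

lemma central_binomial_eq_twice:
  assumes "0 < k"
  shows "(2 * k) choose k = 2 * ((2 * k - 1) choose k)"
proof -
  have "(2 * k) choose k = ((2 * k - 1) choose (k - 1)) + ((2 * k - 1) choose k)"
    using choose_reduce_nat assms by auto
  then show ?thesis
    using choose_odd_middle[OF assms] by simp
qed

lemma h_diagonal:
  assumes "0 < k" and "k \<le> n" and "n < 2 * k"
  shows "h (2 * k) n k = (2 * k - 1) choose (k - 1)"
proof -
  define b where "b = 2 * k - n"
  have "1 \<le> b" "b \<le> k"
    using assms unfolding b_def by auto
  define f where "f j = (b choose j) * ((n - 1) choose (k - 1 - j))" for j
  have "(2 * k - 1) choose (k - 1) = (\<Sum>j\<le>k - 1. f j)"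
    using vandermonde[of b "n - 1" "k - 1"] assms unfolding f_def b_def by simp
  also have "\<dots> = f 0 + (\<Sum>j = 1..b - 1. f j) + (\<Sum>j = b..k - 1. f j)"
  proof -
    have "{..k - 1} = insert 0 ({1..b - 1} \<union> {b..k - 1})"
      using \<open>1 \<le> b\<close> \<open>b \<le> k\<close> by auto
    then show ?thesis
      using \<open>1 \<le> b\<close> by (simp add: sum.union_disjoint)
  qed
  also have "(\<Sum>j = b..k - 1. f j) = (n - 1) choose k"
  proof (cases "n = k")
    case True
    then show ?thesis
      using assms unfolding b_def by simp
  next
    case False
    \<comment> \<open>only \<open>j = b\<close> survives, and \<open>k - 1 - b = (n - 1) - k\<close>\<close>
    then have "{b..k - 1} = insert b {b + 1..k - 1}"
      using assms unfolding b_def by auto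
    moreover have "(\<Sum>j = b + 1..k - 1. f j) = 0"
      unfolding f_def by (auto intro!: sum.neutral)
    moreover have "f b = (n - 1) choose k"
      using False assms binomial_symmetric[of k "n - 1"]
      unfolding f_def b_def by (simp add: diff_diff_add)
    ultimately show ?thesis
      by simp
  qed
  also have "f 0 + (\<Sum>j = 1..b - 1. f j) + ((n - 1) choose k) = h (2 * k) n k"
  proof -
    have "n choose k = ((n - 1) choose (k - 1)) + ((n - 1) choose k)"
      using choose_reduce_nat assms by auto
    moreover have "(\<Sum>j = 1..b - 1. f j)
        = (\<Sum>i = 1..2 * k - n - 1. ((n - 1) choose (k - i - 1)) * ((2 * k - n) choose i))"
      unfolding f_def b_def by (rule sum.cong) (auto simp: diff_diff_add)
    ultimately show ?thesis
      unfolding h_def f_def by simp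
  qed
  finally show ?thesis ..
qed

lemma alpha_eqI:
  assumes "mnk_intersecting m n k F0"
    and "\<And>F. mnk_intersecting m n k F \<Longrightarrow> card F \<le> card F0"
  shows "alpha m n k = card F0"
proof -
  have "{card F | F. mnk_intersecting m n k F} \<subseteq> {..card F0}"
    using assms(2) by auto
  then show ?thesis
    unfolding alpha_def using assms
    by (intro Max_eqI) (auto intro: finite_subset)
qed

theorem proposition5:
  fixes k n :: nat
  assumes "0 < k" and "k \<le> n" and "n < 2 * k"
  shows "real (alpha (2 * k) n k) = real ((2 * k) choose k) / 2
         \<and> alpha (2 * k) n k = h (2 * k) n k"
proof -
  define F0 where "F0 = ksubsets {1..2 * k - 1} k"
  have card_F0: "card F0 = (2 * k - 1) choose k"
    unfolding F0_def using card_ksubsets[of "{1..2 * k - 1}" k] by simp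
  have "mnk_intersecting (2 * k) n k F0"
    unfolding mnk_intersecting_def
  proof (intro conjI)
    show "intersecting F0"
      unfolding F0_def using assms by (intro intersecting_ksubsets) auto
    have "{1..n} \<subseteq> {1..2 * k - 1}" "{1..2 * k - 1} \<subseteq> {1..2 * k}"
      using assms by auto
    then show "ksubsets {1..n} k \<subseteq> F0" "F0 \<subseteq> ksubsets {1..2 * k} k"
      unfolding F0_def ksubsets_def by blast+
  qed
  moreover have "card F \<le> card F0" if "mnk_intersecting (2 * k) n k F" for F
  proof -
    have "2 * card F \<le> (2 * k) choose k"
      using that card_intersecting_le_half[of "{1..2 * k}" k F]
      unfolding mnk_intersecting_def by simp
    then show ?thesis
      using central_binomial_eq_twice[OF assms(1)] card_F0 by simp
  qed
  ultimately have "alpha (2 * k) n k = (2 * k - 1) choose k"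
    using alpha_eqI card_F0 by metis
  then show ?thesis
    using central_binomial_eq_twice[OF assms(1)] choose_odd_middle[OF assms(1)]
      h_diagonal[OF assms] by simp
qed

end
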